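(* $$\lim_{k \to \infty} \sum_{n=0}^{\infty} (-1)^n \frac{1}{n!}\left\langle {n \atop k} \right\rangle = 0,$$ where the limit is over nonnegative integers $k$.
   Context: For integers $n,k\ge 0$, the Eulerian number $\left\langle {n \atop k} \right\rangle$ is the number of permutations of $\{1,\ldots,n\}$ with exactly $k$ ascents (positions $i$ with $\sigma(i)<\sigma(i+1)$), with $\left\langle {0 \atop 0} \right\rangle=1$ and $\left\langle {0 \atop k} \right\rangle=0$ for $k\ge1$; in particular $\left\langle {n \atop k} \right\rangle=0$ when $n<k$. *)

theory Defs
  imports Complex_Main "HOL-Combinatorics.Permutations"
begin

definition ascents :: "nat \<Rightarrow> (nat \<Rightarrow> nat) \<Rightarrow> nat" where
  "ascents n \<sigma> = card {i \<in> {1..<n}. \<sigma> i < \<sigma> (Suc i)}"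

definition eulerian :: "nat \<Rightarrow> nat \<Rightarrow> nat" where
  "eulerian n k = card {\<sigma>. \<sigma> permutes {1..n} \<and> ascents n \<sigma> = k}"

end

(*
  Inserting n + 1 into a permutation of {1..n} right after position s in {0..n} creates a new
  ascent unless s = 0 or s is an ascent.  This gives the recurrence
  A(n+1,k) = (k+1) A(n,k) + (n+1-k) A(n,k-1) and hence the explicit formula
  A(n,k) = sum_{j<=k} (-1)^j C(n+1,j) (k+1-j)^n.  Summing exponential series termwise, the
  alternating sum a_k = sum_n (-1)^n A(n,k) / n! is the k-th coefficient of
  G(t) = (1-t) e^(t-1) / (1 - t e^(t-1)).  The reciprocal (e^(1-t) - t) / (1-t) has constant
  coefficient e and n-th coefficient e (sum_{i<=n} (-1)^i / i! - 1/e), of size at most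
  e / (n+1)!, so at radius 6/5 its constant term dominates all others together; comparing
  coefficients in G (1/G) = 1 then yields |a_k| <= |a_0| (5/6)^k.
*)

theory Submission
  imports Defs "HOL-Computational_Algebra.Formal_Power_Series"
begin

unbundle fps_syntax

section \<open>Inserting the largest element\<close>

definition insert_max :: "nat \<Rightarrow> (nat \<Rightarrow> nat) \<Rightarrow> nat \<Rightarrow> nat \<Rightarrow> nat" where
  "insert_max n \<tau> s i =
     (if i \<le> s then \<tau> i else if i = Suc s then Suc n else if i \<le> Suc n then \<tau> (i - 1) else i)"

definition ascent_set :: "nat \<Rightarrow> (nat \<Rightarrow> nat) \<Rightarrow> nat set" where
  "ascent_set n \<sigma> = {i \<in> {1..<n}. \<sigma> i < \<sigma> (Suc i)}"

lemma ascents_eq_card_ascent_set: "ascents n \<sigma> = card (ascent_set n \<sigma>)"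
  by (simp add: ascents_def ascent_set_def)

lemma permutes_interval_le:
  fixes i n :: nat
  assumes "\<tau> permutes {1..n}" "i \<le> n"
  shows "\<tau> i \<le> n"
  using assms permutes_in_image[OF assms(1), of i] permutes_not_in[OF assms(1), of i]
  by (cases "i = 0") auto

lemma insert_max_apply:
  "i \<noteq> Suc s \<Longrightarrow> i \<le> Suc n \<Longrightarrow> insert_max n \<tau> s i = \<tau> (if i \<le> s then i else i - 1)"
  by (simp add: insert_max_def)

lemma insert_max_eq_Suc_iff:
  assumes "\<tau> permutes {1..n}" "s \<le> n" "i \<le> Suc n"
  shows "insert_max n \<tau> s i = Suc n \<longleftrightarrow> i = Suc s"
proof -
  have "\<tau> (if i \<le> s then i else i - 1) \<le> n"
    by (rule permutes_interval_le[OF assms(1)]) (use assms in auto)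
  then show ?thesis
    using assms insert_max_apply[of i s n \<tau>] by (auto simp: insert_max_def)
qed

lemma insert_max_permutes:
  assumes \<tau>: "\<tau> permutes {1..n}" and "s \<le> n"
  shows "insert_max n \<tau> s permutes {1..Suc n}"
proof (rule bij_imp_permutes)
  let ?\<sigma> = "insert_max n \<tau> s"
  have "inj_on ?\<sigma> {1..Suc n}"
  proof (rule inj_onI)
    fix i j assume i: "i \<in> {1..Suc n}" and j: "j \<in> {1..Suc n}" and eq: "?\<sigma> i = ?\<sigma> j"
    show "i = j"
    proof (cases "i = Suc s \<or> j = Suc s")
      case True
      have "i = Suc s \<longleftrightarrow> ?\<sigma> i = Suc n"
        using i by (intro insert_max_eq_Suc_iff[OF \<tau> \<open>s \<le> n\<close>, symmetric]) simp
      also have "\<dots> \<longleftrightarrow> j = Suc s"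
        using j by (simp only: eq, intro insert_max_eq_Suc_iff[OF \<tau> \<open>s \<le> n\<close>]) simp
      finally show ?thesis
        using True by auto
    next
      case False
      then have "\<tau> (if i \<le> s then i else i - 1) = \<tau> (if j \<le> s then j else j - 1)"
        using eq i j by (simp add: insert_max_apply)
      then have "(if i \<le> s then i else i - 1) = (if j \<le> s then j else j - 1)"
        using permutes_inj[OF \<tau>] by (simp add: inj_eq)
      then show ?thesis
        using False i j by (simp split: if_splits)
    qed
  qed
  moreover have sub: "?\<sigma> ` {1..Suc n} \<subseteq> {1..Suc n}"
  proof (intro image_subsetI)
    fix i assume i: "i \<in> {1..Suc n}"
    show "?\<sigma> i \<in> {1..Suc n}"
    proof (cases "i = Suc s")
      case False
      define j where "j = (if i \<le> s then i else i - 1)"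
      have "?\<sigma> i = \<tau> j"
        using False i by (simp add: insert_max_apply j_def)
      moreover have "j \<in> {1..n}"
        using False i \<open>s \<le> n\<close> by (auto simp: j_def)
      then have "\<tau> j \<in> {1..n}"
        by (rule permutes_in_image[OF \<tau>, THEN iffD2])
      ultimately show ?thesis
        by simp
    qed (simp add: insert_max_def)
  qed
  ultimately show "bij_betw ?\<sigma> {1..Suc n} {1..Suc n}"
    using endo_inj_surj[OF _ sub] by (simp add: bij_betw_def)
  show "?\<sigma> i = i" if "i \<notin> {1..Suc n}" for i
    using that \<open>s \<le> n\<close> permutes_not_in[OF \<tau>, of i] by (auto simp: insert_max_def)
qed

lemma inj_on_insert_max:
  "inj_on (\<lambda>(\<tau>, s). insert_max n \<tau> s) ({\<tau>. \<tau> permutes {1..n}} \<times> {..n})"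
proof (rule inj_onI, clarify)
  fix \<tau> s \<tau>' s'
  assume \<tau>: "\<tau> permutes {1..n}" and \<tau>': "\<tau>' permutes {1..n}" and "s \<le> n" "s' \<le> n"
    and eq: "insert_max n \<tau> s = insert_max n \<tau>' s'"
  have "insert_max n \<tau>' s' (Suc s) = Suc n"
    using \<open>s \<le> n\<close> by (simp add: eq [symmetric] insert_max_def)
  then have "s = s'"
    using insert_max_eq_Suc_iff[OF \<tau>' \<open>s' \<le> n\<close>, of "Suc s"] \<open>s \<le> n\<close> by simp
  moreover have "\<tau> i = \<tau>' i" for i
  proof -
    consider "i \<le> s" | "s < i" "i \<le> n" | "n < i" by linarith
    then show ?thesis
    proof cases
      case 1
      then show ?thesis using fun_cong[OF eq, of i] \<open>s = s'\<close> by (simp add: insert_max_def)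
    next
      case 2
      then show ?thesis using fun_cong[OF eq, of "Suc i"] \<open>s = s'\<close> by (simp add: insert_max_def)
    next
      case 3
      then show ?thesis using permutes_not_in[OF \<tau>, of i] permutes_not_in[OF \<tau>', of i] by simp
    qed
  qed
  ultimately show "\<tau> = \<tau>' \<and> s = s'"
    by auto
qed

lemma insert_max_image:
  "(\<lambda>(\<tau>, s). insert_max n \<tau> s) ` ({\<tau>. \<tau> permutes {1..n}} \<times> {..n}) =
    {\<sigma>. \<sigma> permutes {1..Suc n}}"
    (is "?f ` ?D = ?P")
proof (rule card_subset_eq)
  show "finite ?P"
    by (simp add: finite_permutations)
  show "?f ` ?D \<subseteq> ?P"
    using insert_max_permutes by auto
  show "card (?f ` ?D) = card ?P"
    unfolding card_image[OF inj_on_insert_max] card_cartesian_product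
    by (simp add: card_permutations)
qed

lemma ascent_set_subset: "ascent_set n \<sigma> \<subseteq> {1..<n}"
  by (auto simp: ascent_set_def)

lemma ascent_set_insert_max:
  assumes \<tau>: "\<tau> permutes {1..n}" and "s \<le> n"
  shows "ascent_set (Suc n) (insert_max n \<tau> s) =
    {i \<in> ascent_set n \<tau>. i < s} \<union> ({s} - {0}) \<union> Suc ` {i \<in> ascent_set n \<tau>. s < i}"
    (is "?A' = ?L \<union> ?M \<union> ?R")
proof (intro equalityI subsetI)
  fix i assume "i \<in> ?A'"
  then have i: "1 \<le> i" "i \<le> n" and asc: "insert_max n \<tau> s i < insert_max n \<tau> s (Suc i)"
    by (auto simp: ascent_set_def)
  consider "i < s" | "i = s" | "i = Suc s" | "Suc s < i" by linarith
  then show "i \<in> ?L \<union> ?M \<union> ?R"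
  proof cases
    case 1
    then show ?thesis using i asc \<open>s \<le> n\<close> by (auto simp: ascent_set_def insert_max_def)
  next
    case 2
    then show ?thesis using i by simp
  next
    case 3
    then show ?thesis using i asc permutes_interval_le[OF \<tau>, of "Suc s"] by (simp add: insert_max_def)
  next
    case 4
    then have "i - 1 \<in> {i \<in> ascent_set n \<tau>. s < i}"
      using i asc by (auto simp: ascent_set_def insert_max_def)
    then show ?thesis
      using 4 by (auto intro!: image_eqI[of i Suc "i - 1"])
  qed
next
  fix i assume "i \<in> ?L \<union> ?M \<union> ?R"
  then consider "i \<in> ascent_set n \<tau>" "i < s" | "i = s" "s \<noteq> 0"
    | j where "j \<in> ascent_set n \<tau>" "s < j" "i = Suc j"
    by auto
  then show "i \<in> ?A'"
  proof cases
    case 1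
    then show ?thesis by (auto simp: ascent_set_def insert_max_def)
  next
    case 2
    then show ?thesis
      using \<open>s \<le> n\<close> permutes_interval_le[OF \<tau>, of s] by (simp add: ascent_set_def insert_max_def)
  next
    case 3
    then show ?thesis by (auto simp: ascent_set_def insert_max_def)
  qed
qed

lemma ascents_insert_max:
  assumes \<tau>: "\<tau> permutes {1..n}" and "s \<le> n"
  shows "ascents (Suc n) (insert_max n \<tau> s) =
    ascents n \<tau> + (if s \<in> insert 0 (ascent_set n \<tau>) then 0 else 1)"
proof -
  define A where "A = ascent_set n \<tau>"
  have fin: "finite A"
    using ascent_set_subset finite_subset unfolding A_def by blast
  have card_new: "card (ascent_set (Suc n) (insert_max n \<tau> s)) =
      card {i \<in> A. i < s} + (if s = 0 then 0 else 1) + card {i \<in> A. s < i}"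
    unfolding ascent_set_insert_max[OF \<tau> \<open>s \<le> n\<close>] A_def [symmetric]
    using fin by (subst card_Un_disjoint; auto simp: card_image)+
  have A_eq: "A = {i \<in> A. i < s} \<union> (A \<inter> {s}) \<union> {i \<in> A. s < i}"
    by auto
  have card_old: "card A = card {i \<in> A. i < s} + (if s \<in> A then 1 else 0) + card {i \<in> A. s < i}"
    using fin by (subst A_eq, subst card_Un_disjoint; auto)+
  have "0 \<notin> A"
    using ascent_set_subset[of n \<tau>] unfolding A_def by auto
  then show ?thesis
    using card_new card_old unfolding ascents_eq_card_ascent_set A_def [symmetric] by auto
qed

lemma card_insert_max_ascents:
  assumes \<tau>: "\<tau> permutes {1..n}"
  shows "card {s \<in> {..n}. ascents (Suc n) (insert_max n \<tau> s) = k} =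
    (if k = ascents n \<tau> then Suc k else 0) + (if k = Suc (ascents n \<tau>) then n - ascents n \<tau> else 0)"
proof -
  define A where "A = ascent_set n \<tau>"
  have A: "A \<subseteq> {1..<n}" "finite A"
    using ascent_set_subset[of n \<tau>] finite_subset unfolding A_def by auto
  have "0 \<notin> A"
    using A(1) by fastforce
  then have card_keep: "card (insert 0 A) = Suc (card A)"
    using A(2) by simp
  have card_new: "card ({..n} - insert 0 A) = n - card A"
    using A by (subst card_Diff_subset) (auto simp: card_keep)
  have "ascents (Suc n) (insert_max n \<tau> s) = card A + (if s \<in> insert 0 A then 0 else 1)"
    if "s \<le> n" for s
    using ascents_insert_max[OF \<tau> that] by (simp add: ascents_eq_card_ascent_set A_def)
  then have "{s \<in> {..n}. ascents (Suc n) (insert_max n \<tau> s) = k} =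
      {s \<in> {..n}. card A + (if s \<in> insert 0 A then 0 else 1) = k}"
    by auto
  also have "\<dots> = (if k = card A then insert 0 A else if k = Suc (card A) then {..n} - insert 0 A else {})"
    using A by auto
  finally show ?thesis
    using card_keep card_new by (simp add: ascents_eq_card_ascent_set A_def)
qed

lemma eulerian_Suc:
  "eulerian (Suc n) k = Suc k * eulerian n k + (if k = 0 then 0 else (Suc n - k) * eulerian n (k - 1))"
proof -
  let ?P = "{\<tau>. \<tau> permutes {1..n}}"
  let ?f = "\<lambda>(\<tau>, s). insert_max n \<tau> s"
  let ?D = "{x \<in> ?P \<times> {..n}. ascents (Suc n) (?f x) = k}"
  have fin: "finite ?P"
    by (simp add: finite_permutations)
  have "{\<sigma>. \<sigma> permutes {1..Suc n} \<and> ascents (Suc n) \<sigma> = k} =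
      {\<sigma> \<in> ?f ` (?P \<times> {..n}). ascents (Suc n) \<sigma> = k}"
    by (simp only: insert_max_image mem_Collect_eq)
  also have "\<dots> = ?f ` ?D"
    by blast
  finally have "eulerian (Suc n) k = card ?D"
    unfolding eulerian_def by (simp add: card_image inj_on_subset[OF inj_on_insert_max])
  also have "?D = (SIGMA \<tau>:?P. {s \<in> {..n}. ascents (Suc n) (insert_max n \<tau> s) = k})"
    by auto
  also have "card \<dots> = (\<Sum>\<tau>\<in>?P. card {s \<in> {..n}. ascents (Suc n) (insert_max n \<tau> s) = k})"
    using fin by (simp add: card_SigmaI)
  also have "\<dots> = (\<Sum>\<tau>\<in>?P. if ascents n \<tau> = k then Suc k else 0) +
      (\<Sum>\<tau>\<in>?P. if Suc (ascents n \<tau>) = k then Suc n - k else 0)"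
    unfolding sum.distrib [symmetric]
    by (rule sum.cong[OF refl], subst card_insert_max_ascents) auto
  also have "\<dots> = Suc k * eulerian n k + (if k = 0 then 0 else (Suc n - k) * eulerian n (k - 1))"
    using fin by (cases k) (simp_all add: sum.inter_filter [symmetric] eulerian_def)
  finally show ?thesis .
qed

lemma eulerian_0_left: "eulerian 0 k = (if k = 0 then 1 else 0)"
  by (simp add: eulerian_def ascents_def)

lemma ascents_le: "ascents n \<sigma> \<le> n - 1"
  unfolding ascents_eq_card_ascent_set using card_mono[OF _ ascent_set_subset, of n \<sigma>] by simp

lemma eulerian_eq_0:
  assumes "n < k"
  shows "eulerian n k = 0"
proof -
  have "ascents n \<sigma> \<noteq> k" for \<sigma>
    using ascents_le[of n \<sigma>] assms by linarith
  then show ?thesis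
    by (simp add: eulerian_def)
qed

section \<open>An explicit formula\<close>

definition eulerian_sum :: "nat \<Rightarrow> nat \<Rightarrow> real" where
  "eulerian_sum n k = (\<Sum>j\<le>k. (-1) ^ j * real (Suc n choose j) * real (Suc k - j) ^ n)"

lemma Suc_times_binomial_Suc_real:
  "real (Suc i) * real (N choose Suc i) = (real N - real i) * real (N choose i)"
proof -
  have "of_nat (Suc i) * (real N gchoose Suc i) = real N * ((real N - 1) gchoose i)"
    by (rule gbinomial_absorption)
  also have "\<dots> = (real N - of_nat i) * (real N gchoose i)"
    by (rule gbinomial_absorb_comp [symmetric])
  finally show ?thesis
    by (simp only: binomial_gbinomial of_nat_id)
qed

lemma eulerian_sum_0_left: "eulerian_sum 0 k = (if k = 0 then 1 else 0)"
  unfolding eulerian_sum_def by (induction k) (auto simp: binomial_eq_0)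

lemma eulerian_sum_0_right: "eulerian_sum n 0 = 1"
  by (simp add: eulerian_sum_def)

lemma eulerian_sum_Suc_Suc:
  "eulerian_sum (Suc n) (Suc k) =
    real (k + 2) * eulerian_sum n (Suc k) + (real n - real k) * eulerian_sum n k"
proof -
  define b where "b i = real (Suc k - i)" for i
  have "eulerian_sum (Suc n) (Suc k) =
      real (k + 2) ^ Suc n + (\<Sum>i\<le>k. (-1) ^ Suc i * real (Suc (Suc n) choose Suc i) * b i ^ Suc n)"
    unfolding eulerian_sum_def b_def by (subst sum.atMost_Suc_shift) simp
  moreover have "eulerian_sum n (Suc k) =
      real (k + 2) ^ n + (\<Sum>i\<le>k. (-1) ^ Suc i * real (Suc n choose Suc i) * b i ^ n)"
    unfolding eulerian_sum_def b_def by (subst sum.atMost_Suc_shift) simp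
  moreover have "eulerian_sum n k = (\<Sum>i\<le>k. (-1) ^ i * real (Suc n choose i) * b i ^ n)"
    unfolding eulerian_sum_def b_def by simp
  moreover have "(-1) ^ Suc i * real (Suc (Suc n) choose Suc i) * b i ^ Suc n =
      real (k + 2) * ((-1) ^ Suc i * real (Suc n choose Suc i) * b i ^ n) +
      (real n - real k) * ((-1) ^ i * real (Suc n choose i) * b i ^ n)"
    if "i \<le> k" for i
  proof -
    define c0 c1 where "c0 = real (Suc n choose i)" and "c1 = real (Suc n choose Suc i)"
    have pascal: "real (Suc (Suc n) choose Suc i) = c0 + c1"
      by (simp add: c0_def c1_def)
    have absorb: "real (Suc i) * c1 = (real (Suc n) - real i) * c0"
      unfolding c0_def c1_def by (rule Suc_times_binomial_Suc_real)
    have bi: "b i = real k + 1 - real i"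
      using that by (simp add: b_def of_nat_diff)
    have key: "(c0 + c1) * b i = real (k + 2) * c1 - (real n - real k) * c0"
      using absorb unfolding bi by (simp add: algebra_simps)
    have "(-1) ^ Suc i * (c0 + c1) * b i ^ Suc n = - ((c0 + c1) * b i) * ((-1) ^ i * b i ^ n)"
      by (simp add: algebra_simps)
    also have "\<dots> = real (k + 2) * ((-1) ^ Suc i * c1 * b i ^ n) + (real n - real k) * ((-1) ^ i * c0 * b i ^ n)"
      unfolding key by (simp add: algebra_simps)
    finally show ?thesis
      by (simp only: pascal c0_def c1_def)
  qed
  ultimately show ?thesis
    by (simp add: distrib_left sum_distrib_left sum.distrib)
qed

lemma eulerian_eq_eulerian_sum: "real (eulerian n k) = eulerian_sum n k"
proof (induction n arbitrary: k)
  case 0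
  then show ?case
    by (simp add: eulerian_0_left eulerian_sum_0_left)
next
  case (Suc n)
  show ?case
  proof (cases k)
    case 0
    then show ?thesis
      using Suc.IH[of 0] eulerian_Suc[of n 0] by (simp add: eulerian_sum_0_right)
  next
    case (Suc k')
    have diff: "real (n - k') * eulerian_sum n k' = (real n - real k') * eulerian_sum n k'"
      using Suc.IH[of k'] eulerian_eq_0[of n k'] by (cases "k' \<le> n") (simp_all add: of_nat_diff)
    have "eulerian (Suc n) k = Suc (Suc k') * eulerian n (Suc k') + (n - k') * eulerian n k'"
      using eulerian_Suc[of n k] by (simp add: Suc)
    then have "real (eulerian (Suc n) k) =
        real (Suc (Suc k')) * real (eulerian n (Suc k')) + real (n - k') * real (eulerian n k')"
      by (simp only: of_nat_add of_nat_mult)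
    also have "\<dots> = eulerian_sum (Suc n) k"
      using Suc.IH[of k'] Suc.IH[of "Suc k'"] diff by (simp add: Suc eulerian_sum_Suc_Suc)
    finally show ?thesis .
  qed
qed

section \<open>The alternating sums as power series coefficients\<close>

lemma sums_binomial_exp:
  fixes y :: real
  shows "(\<lambda>n. real (n choose j) * y ^ n / fact n) sums (y ^ j / fact j * exp y)"
proof -
  define f where "f n = real (n choose j) * y ^ n / fact n" for n
  have "f (n + j) = y ^ j / fact j * (y ^ n / fact n)" for n
  proof -
    have "real ((n + j) choose j) = fact (n + j) / (fact j * fact n)"
      using binomial_fact[of j "n + j"] by simp
    then show ?thesis
      unfolding f_def by (simp add: power_add field_simps)
  qed
  then have "(\<lambda>n. f (n + j)) sums (y ^ j / fact j * exp y)"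
    using sums_mult[OF exp_converges[of y, unfolded scaleR_conv_of_real], of "y ^ j / fact j"]
    by (simp add: divide_inverse mult_ac)
  moreover have "(\<Sum>n<j. f n) = 0"
    by (simp add: f_def binomial_eq_0)
  ultimately show ?thesis
    unfolding f_def [symmetric] using sums_iff_shift[of f j] by simp
qed

lemma sums_Suc_binomial_exp:
  fixes y :: real
  shows "(\<lambda>n. real (Suc n choose j) * y ^ n / fact n) sums
    ((y ^ j / fact j + (if j = 0 then 0 else y ^ (j - 1) / fact (j - 1))) * exp y)"
proof (cases j)
  case 0
  then show ?thesis
    using sums_binomial_exp[of 0 y] by simp
next
  case (Suc i)
  then show ?thesis
    using sums_add[OF sums_binomial_exp[of j y] sums_binomial_exp[of i y]]
    by (simp add: add_divide_distrib distrib_right add.commute)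
qed

lemma neg_one_power_mult_neg_power:
  fixes x :: real
  shows "(-1) ^ n * (- x) ^ n = x ^ n"
  by (simp add: power_mult_distrib [symmetric])

lemma sums_alternating_Suc_binomial_exp:
  fixes x :: real
  shows "(\<lambda>n. (-1) ^ j * (real (Suc n choose j) * (- x) ^ n / fact n)) sums
    (exp (- x) * (x ^ j / fact j - (if j = 0 then 0 else x ^ (j - 1) / fact (j - 1))))"
proof -
  define c where "c = (- x) ^ j / fact j + (if j = 0 then 0 else (- x) ^ (j - 1) / fact (j - 1))"
  have "(-1) ^ j * c = x ^ j / fact j - (if j = 0 then 0 else x ^ (j - 1) / fact (j - 1))"
    (is "_ = ?r")
  proof (cases j)
    case (Suc i)
    then show ?thesis
      using neg_one_power_mult_neg_power[of j x] neg_one_power_mult_neg_power[of i x]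
      by (simp add: c_def algebra_simps)
  qed (simp add: c_def)
  then have signed_coeff: "(-1) ^ j * (c * exp (- x)) = exp (- x) * ?r"
    by (metis mult.assoc mult.commute)
  have "(\<lambda>n. (-1) ^ j * (real (Suc n choose j) * (- x) ^ n / fact n)) sums
      ((-1) ^ j * (c * exp (- x)))"
    unfolding c_def by (rule sums_mult, rule sums_Suc_binomial_exp)
  then show ?thesis
    unfolding signed_coeff .
qed

lemma alternating_eulerian_eq_sum:
  "(-1) ^ n * real (eulerian n k) / fact n =
    (\<Sum>j\<le>k. (-1) ^ j * (real (Suc n choose j) * (- real (Suc k - j)) ^ n / fact n))"
proof -
  have "(-1) ^ n * real (eulerian n k) / fact n =
      (\<Sum>j\<le>k. (-1) ^ j * (real (Suc n choose j) * ((-1) ^ n * real (Suc k - j) ^ n) / fact n))"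
    unfolding eulerian_eq_eulerian_sum eulerian_sum_def
    by (simp add: sum_distrib_left sum_divide_distrib mult_ac)
  moreover have "(-1) ^ n * real (Suc k - j) ^ n = (- real (Suc k - j)) ^ n" for j
    by (simp add: power_mult_distrib [symmetric])
  ultimately show ?thesis
    by (simp only:)
qed

definition poisson_diag_sum :: "nat \<Rightarrow> real" where
  "poisson_diag_sum n = (\<Sum>j<n. exp (- real (n - j)) * real (n - j) ^ j / fact j)"

lemma alternating_eulerian_sums:
  "(\<lambda>n. (-1) ^ n * real (eulerian n k) / fact n) sums
     (poisson_diag_sum (Suc k) - poisson_diag_sum k)"
proof -
  define m where "m j = real (Suc k - j)" for j
  have "(\<lambda>n. \<Sum>j\<le>k. (-1) ^ j * (real (Suc n choose j) * (- m j) ^ n / fact n)) sums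
      (\<Sum>j\<le>k. exp (- m j) * (m j ^ j / fact j - (if j = 0 then 0 else m j ^ (j - 1) / fact (j - 1))))"
    by (rule sums_sum, rule sums_alternating_Suc_binomial_exp)
  moreover have "(\<Sum>j\<le>k. exp (- m j) * m j ^ j / fact j) = poisson_diag_sum (Suc k)"
    by (simp add: poisson_diag_sum_def m_def lessThan_Suc_atMost)
  moreover have "(\<Sum>j\<le>k. exp (- m j) * (if j = 0 then 0 else m j ^ (j - 1) / fact (j - 1))) =
      poisson_diag_sum k"
    by (simp add: sum.atMost_shift poisson_diag_sum_def m_def)
  ultimately show ?thesis
    unfolding alternating_eulerian_eq_sum m_def [symmetric]
    by (simp add: right_diff_distrib sum_subtractf)
qed

definition exp_shift_fps :: "real fps" where
  "exp_shift_fps = fps_const (exp (- 1)) * fps_exp 1"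

definition alt_eulerian_fps :: "real fps" where
  "alt_eulerian_fps = (1 - fps_X) * exp_shift_fps * inverse (1 - fps_X * exp_shift_fps)"

definition alt_eulerian_fps_inv :: "real fps" where
  "alt_eulerian_fps_inv = (fps_const (exp 1) * fps_exp (- 1) - fps_X) * inverse (1 - fps_X)"

lemma exp_shift_fps_power_nth: "(exp_shift_fps ^ i) $ m = exp (- real i) * real i ^ m / fact m"
proof -
  have "exp_shift_fps ^ i = fps_const (exp (- 1) ^ i) * fps_exp (real i)"
    by (simp add: exp_shift_fps_def power_mult_distrib fps_exp_power_mult)
  moreover have "exp (- 1) ^ i = exp (- real i)"
    using exp_of_nat_mult[of i "- 1 :: real"] by simp
  ultimately show ?thesis
    by simp
qed

lemma poisson_diag_sum_fps_nth:
  "(fps_X * exp_shift_fps * inverse (1 - fps_X * exp_shift_fps)) $ n = poisson_diag_sum n"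
proof -
  define B where "B = fps_X * exp_shift_fps"
  have B0: "B $ 0 = 0"
    by (simp add: B_def)
  have "inverse (1 - B) = Abs_fps (\<lambda>_. 1) oo B"
    using gp[OF B0] B0 by (simp add: fps_divide_unit)
  moreover have "B * inverse (1 - B) = inverse (1 - B) - 1"
    using inverse_mult_eq_1'[of "1 - B"] B0 by (simp add: algebra_simps)
  ultimately have "(B * inverse (1 - B)) $ n = (\<Sum>i=0..n. (B ^ i) $ n) - (if n = 0 then 1 else 0)"
    by (simp add: fps_compose_nth)
  also have "\<dots> = (\<Sum>i=1..n. exp (- real i) * real i ^ (n - i) / fact (n - i))"
    by (simp add: B_def power_mult_distrib fps_X_power_mult_nth exp_shift_fps_power_nth
        sum.atLeast_Suc_atMost)
  also have "\<dots> = poisson_diag_sum n"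
    unfolding poisson_diag_sum_def
    by (rule sum.reindex_bij_witness[where i = "\<lambda>j. n - j" and j = "\<lambda>i. n - i"]) auto
  finally show ?thesis
    by (simp add: B_def mult.assoc)
qed

lemma alt_eulerian_fps_nth: "alt_eulerian_fps $ k = poisson_diag_sum (Suc k) - poisson_diag_sum k"
proof -
  define P where "P = fps_X * exp_shift_fps * inverse (1 - fps_X * exp_shift_fps)"
  have "alt_eulerian_fps $ k = (fps_X * alt_eulerian_fps) $ Suc k"
    by simp
  also have "fps_X * alt_eulerian_fps = (1 - fps_X) * P"
    by (simp add: alt_eulerian_fps_def P_def mult_ac)
  also have "((1 - fps_X) * P) $ Suc k = P $ Suc k - P $ k"
    by (simp add: left_diff_distrib)
  finally show ?thesis
    unfolding P_def poisson_diag_sum_fps_nth .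
qed

lemma alt_eulerian_fps_mult_inv: "alt_eulerian_fps * alt_eulerian_fps_inv = 1"
proof -
  define E c where "E = exp_shift_fps" and "c = fps_const (exp 1) * fps_exp (- 1 :: real)"
  have "E * c = fps_const (exp (- 1) * exp 1) * (fps_exp 1 * fps_exp (- 1))"
    by (simp add: E_def c_def exp_shift_fps_def mult_ac)
  also have "\<dots> = 1"
    by (simp add: fps_exp_add_mult [symmetric] exp_minus_inverse mult.commute)
  finally have Ec: "E * c = 1" .
  have inv: "inverse (1 - fps_X * E) * (1 - fps_X * E) = 1"
    by (rule inverse_mult_eq_1) (simp add: E_def)
  have "alt_eulerian_fps * alt_eulerian_fps_inv =
      ((1 - fps_X) * inverse (1 - fps_X)) * (inverse (1 - fps_X * E) * (E * c - fps_X * E))"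
    unfolding alt_eulerian_fps_def alt_eulerian_fps_inv_def E_def [symmetric] c_def [symmetric]
    by algebra
  also have "\<dots> = 1"
    by (simp add: Ec inv inverse_mult_eq_1')
  finally show ?thesis .
qed

section \<open>Geometric decay of the coefficients\<close>

lemma fps_nth_geometric_decay_of_mult_eq_1:
  fixes f g :: "'a :: real_normed_field fps"
  assumes fg: "f * g = 1" and q: "q > 0"
    and g_dominant: "\<And>k. (\<Sum>j=1..k. norm (g $ j) / q ^ j) \<le> norm (g $ 0)"
  shows "norm (f $ k) \<le> norm (f $ 0) * q ^ k"
proof (induction k rule: less_induct)
  case (less k)
  show ?case
  proof (cases k)
    case (Suc k')
    have "f $ 0 * g $ 0 = 1"
      using arg_cong[OF fg, of "\<lambda>h. h $ 0"] by simp
    then have g0: "norm (g $ 0) > 0"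
      by auto
    have "0 = (f * g) $ k"
      using fg Suc by simp
    also have "\<dots> = (\<Sum>i<k. f $ i * g $ (k - i)) + f $ k * g $ 0"
      by (simp add: fps_mult_nth Suc atLeast0AtMost lessThan_Suc_atMost [symmetric])
    finally have "norm (f $ k) * norm (g $ 0) = norm (\<Sum>i<k. f $ i * g $ (k - i))"
      by (simp add: eq_neg_iff_add_eq_0 [symmetric] norm_mult [symmetric])
    also have "\<dots> \<le> (\<Sum>i<k. norm (f $ 0) * q ^ i * norm (g $ (k - i)))"
      using less.IH by (intro order_trans[OF norm_sum] sum_mono)
        (auto simp: norm_mult intro!: mult_right_mono)
    also have "\<dots> = norm (f $ 0) * q ^ k * (\<Sum>i<k. norm (g $ (k - i)) / q ^ (k - i))"
      using q by (auto simp: sum_distrib_left field_simps power_diff intro!: sum.cong)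
    also have "(\<Sum>i<k. norm (g $ (k - i)) / q ^ (k - i)) = (\<Sum>j=1..k. norm (g $ j) / q ^ j)"
      by (rule sum.reindex_bij_witness[where i = "\<lambda>j. k - j" and j = "\<lambda>i. k - i"]) auto
    also have "norm (f $ 0) * q ^ k * \<dots> \<le> norm (f $ 0) * q ^ k * norm (g $ 0)"
      using q by (intro mult_left_mono g_dominant) auto
    finally show ?thesis
      using g0 by simp
  qed simp
qed

lemma two_mult_three_power_le_fact: "2 * 3 ^ k \<le> (fact (k + 2) :: real)"
proof (induction k)
  case (Suc k)
  have "2 * 3 ^ Suc k = 3 * (2 * 3 ^ k :: real)"
    by simp
  also have "\<dots> \<le> 3 * fact (k + 2)"
    using Suc.IH by (intro mult_left_mono) auto
  also have "\<dots> \<le> real (k + 3) * fact (k + 2)"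
    by (intro mult_right_mono) auto
  also have "\<dots> = fact (Suc k + 2)"
    by simp
  finally show ?case .
qed simp

lemma sum_six_fifths_power_over_fact_le_1: "(\<Sum>j=1..k. (6 / 5) ^ j / fact (Suc j)) \<le> (1 :: real)"
proof -
  define a :: "nat \<Rightarrow> real" where "a j = (6 / 5) ^ j / fact (Suc j)" for j
  have "sum a {1..k} \<le> 1 - (2 / 5) ^ k"
  proof (induction k)
    case (Suc k)
    have "a (Suc k) \<le> (6 / 5) ^ Suc k / (2 * 3 ^ k)"
      unfolding a_def using two_mult_three_power_le_fact[of k] by (intro divide_left_mono) auto
    also have "\<dots> = (3 / 5) * (2 / 5) ^ k"
      by (simp add: power_divide field_simps flip: power_mult_distrib)
    finally show ?case
      using Suc.IH by (simp add: sum.cl_ivl_Suc)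
  qed simp
  then show ?thesis
    using zero_le_power[of "2 / 5 :: real" k] unfolding a_def by linarith
qed

lemma alt_eulerian_fps_inv_nth:
  "alt_eulerian_fps_inv $ n = exp 1 * (\<Sum>i\<le>n. (-1) ^ i / fact i) - (if n = 0 then 0 else 1)"
proof -
  have "alt_eulerian_fps_inv $ n = (\<Sum>i\<le>n. exp 1 * ((-1) ^ i / fact i) - (if i = 1 then 1 else 0))"
    by (simp add: alt_eulerian_fps_inv_def fps_inverse_one_minus_fps_X fps_mult_nth [where g = "Abs_fps _"]
        atLeast0AtMost)
  also have "\<dots> = exp 1 * (\<Sum>i\<le>n. (-1) ^ i / fact i) - (if n = 0 then 0 else 1)"
    by (simp add: sum_subtractf sum_distrib_left)
  finally show ?thesis .
qed

lemma exp_minus_one_partial_sum_error: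
  "\<bar>(\<Sum>i\<le>n. (-1) ^ i / fact i) - exp (- 1 :: real)\<bar> \<le> 1 / fact (Suc n)"
proof -
  obtain t where t: "- 1 < t" "t < 0"
    and e: "exp (- 1 :: real) = (\<Sum>m<Suc n. exp 0 / fact m * (- 1) ^ m) + exp t / fact (Suc n) * (- 1) ^ Suc n"
    using Maclaurin_minus[of "- 1 :: real" "Suc n" "\<lambda>_. exp" exp] by (auto intro: DERIV_exp)
  have "\<bar>(\<Sum>i\<le>n. (-1) ^ i / fact i) - exp (- 1 :: real)\<bar> = exp t / fact (Suc n)"
    using e by (simp add: lessThan_Suc_atMost abs_mult)
  also have "\<dots> \<le> 1 / fact (Suc n)"
    using t by (intro divide_right_mono) auto
  finally show ?thesis .
qed

lemma abs_alt_eulerian_fps_inv_nth_le: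
  assumes "n \<ge> 1"
  shows "\<bar>alt_eulerian_fps_inv $ n\<bar> \<le> exp 1 / fact (Suc n)"
proof -
  have "alt_eulerian_fps_inv $ n = exp 1 * ((\<Sum>i\<le>n. (-1) ^ i / fact i) - exp (- 1))"
    using assms by (simp add: alt_eulerian_fps_inv_nth right_diff_distrib exp_minus_inverse)
  then show ?thesis
    using mult_left_mono[OF exp_minus_one_partial_sum_error[of n], of "exp 1"]
    by (simp add: abs_mult)
qed

lemma alt_eulerian_fps_inv_dominated:
  "(\<Sum>j=1..k. \<bar>alt_eulerian_fps_inv $ j\<bar> / (5 / 6) ^ j) \<le> \<bar>alt_eulerian_fps_inv $ 0\<bar>"
proof -
  have "(\<Sum>j=1..k. \<bar>alt_eulerian_fps_inv $ j\<bar> / (5 / 6) ^ j) \<le>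
      (\<Sum>j=1..k. exp 1 * ((6 / 5) ^ j / fact (Suc j)))"
  proof (intro sum_mono)
    fix j assume "j \<in> {1..k}"
    then have "\<bar>alt_eulerian_fps_inv $ j\<bar> / (5 / 6) ^ j \<le> exp 1 / fact (Suc j) / (5 / 6) ^ j"
      by (intro divide_right_mono abs_alt_eulerian_fps_inv_nth_le) auto
    also have "\<dots> = exp 1 * ((6 / 5) ^ j / fact (Suc j))"
      by (simp add: power_divide)
    finally show "\<bar>alt_eulerian_fps_inv $ j\<bar> / (5 / 6) ^ j \<le> exp 1 * ((6 / 5) ^ j / fact (Suc j))" .
  qed
  also have "\<dots> \<le> exp 1"
    using mult_left_mono[OF sum_six_fifths_power_over_fact_le_1, of "exp 1" k]
    by (simp add: sum_distrib_left)
  also have "\<dots> = \<bar>alt_eulerian_fps_inv $ 0\<bar>"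
    by (simp add: alt_eulerian_fps_inv_nth)
  finally show ?thesis .
qed

lemma alt_eulerian_fps_nth_tendsto_0: "(\<lambda>k. alt_eulerian_fps $ k) \<longlonglongrightarrow> 0"
proof (rule tendsto_0_le)
  show "(\<lambda>k. (5 / 6 :: real) ^ k) \<longlonglongrightarrow> 0"
    by (rule LIMSEQ_power_zero) simp
  have "norm (alt_eulerian_fps $ k) \<le> norm (alt_eulerian_fps $ 0) * (5 / 6) ^ k" for k
    using alt_eulerian_fps_inv_dominated
    by (intro fps_nth_geometric_decay_of_mult_eq_1[OF alt_eulerian_fps_mult_inv]) simp_all
  then show "\<forall>\<^sub>F k in sequentially.
      norm (alt_eulerian_fps $ k) \<le> norm ((5 / 6 :: real) ^ k) * norm (alt_eulerian_fps $ 0)"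
    by (simp add: mult.commute)
qed

theorem mainTheorem6:
  shows "(\<forall>k. summable (\<lambda>n. (-1::real) ^ n * real (eulerian n k) / fact n)) \<and>
         (\<lambda>k. \<Sum>n. (-1::real) ^ n * real (eulerian n k) / fact n) \<longlonglongrightarrow> 0"
proof
  show "\<forall>k. summable (\<lambda>n. (-1::real) ^ n * real (eulerian n k) / fact n)"
    using alternating_eulerian_sums sums_summable by blast
  have "(\<Sum>n. (-1::real) ^ n * real (eulerian n k) / fact n) = alt_eulerian_fps $ k" for k
    using sums_unique[OF alternating_eulerian_sums] by (simp add: alt_eulerian_fps_nth)
  then show "(\<lambda>k. \<Sum>n. (-1::real) ^ n * real (eulerian n k) / fact n) \<longlonglongrightarrow> 0"
    using alt_eulerian_fps_nth_tendsto_0 by simp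
qed

end
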